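(* Let $q\ge5$ be even. (i) If $q=2^{2m+1}$, then $V_2=0$ and $V_1=q/2$. (ii) If $q=2^{2m}$, then $V_2=0$ and $V_1=\mathcal T_q$.
   Context: For $m'\in\{0,1,2,3\}$, $V_{m'}$ is the number of $\beta\in\mathbb F_q$ such that the cubic equation $t^3-3\beta t^2-1=0$ (in characteristic $2$: $t^3+\beta t^2+1=0$) has exactly $m'$ distinct solutions $t\in\mathbb F_q$. $\mathrm{Tr}_2$ denotes the absolute trace $\mathbb F_q\to\mathbb F_2$, and for $q=2^{2m}$, $\mathcal T_q=\#\{\beta\in\mathbb F_q:\mathrm{Tr}_2(\beta^3)=1\}$. *)

theory Defs
  imports Main "HOL-Library.Cardinality"
begin

definition cubic_roots :: "'a::{field,finite} \<Rightarrow> nat" where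
  "cubic_roots b = card {t::'a. t^3 + b * t^2 + 1 = 0}"

definition V :: "nat \<Rightarrow> 'a::{field,finite} itself \<Rightarrow> nat" where
  "V k _ = card {b::'a. cubic_roots b = k}"

text \<open>Absolute trace F_q \<rightarrow> F_2 for q = 2^n, values 0/1 viewed inside F_q.\<close>
definition tr2 :: "nat \<Rightarrow> 'a::field \<Rightarrow> 'a" where
  "tr2 n x = (\<Sum>i<n. x ^ (2 ^ i))"

definition T_count :: "nat \<Rightarrow> 'a::{field,finite} itself \<Rightarrow> nat" where
  "T_count n _ = card {b::'a. tr2 n (b^3) = 1}"

end

(* In characteristic 2 a root r of t^3 + b t^2 + 1 is nonzero and determines b = (r^3 + 1) / r^2.
   Dividing out t + r leaves r^2 t^2 + t + r, which the substitution w = r^2 t turns into the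
   Artin-Schreier equation w^2 + w = r^3.  That equation has 0 or 2 solutions, neither of which
   gives back t = r, so the cubic has 1 or 3 roots and never 2, and r |-> (r^3 + 1) / r^2 maps
   the r for which r^3 is not of the form w^2 + w bijectively onto the b with exactly one root.
   The map w |-> w^2 + w is 2-to-1, so its image has q/2 elements.  For q = 2^(2m+1) we have
   q = 2 (mod 3), so cubing is a bijection and V_1 = q - q/2.  For q = 2^n the image lies in the
   kernel of the trace, which as the zero set of a polynomial of degree 2^(n-1) has at most q/2
   elements; so the image is the kernel, and since the trace only takes the values 0 and 1, r^3
   is not of the form w^2 + w exactly when Tr(r^3) = 1. *)

theory Submission
  imports Defs "HOL-Computational_Algebra.Primes" "HOL-Computational_Algebra.Polynomial"
begin

lemma of_nat_card_eq_0: "of_nat CARD('a::{ring_1,finite}) = (0::'a)"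
proof -
  have "(\<Sum>y\<in>UNIV. y) = (\<Sum>y\<in>UNIV. y + (1::'a))"
    by (rule sum.reindex_bij_witness[of _ "\<lambda>y. y + 1" "\<lambda>y. y - 1"]) auto
  also have "\<dots> = (\<Sum>y\<in>UNIV. y) + of_nat CARD('a)"
    by (simp add: sum.distrib)
  finally show ?thesis
    by simp
qed

lemma CHAR_eq_2_if_card_power_2:
  assumes "CARD('a::{field,finite}) = 2 ^ k"
  shows "CHAR('a) = 2"
proof (rule primes_dvd_imp_eq)
  show "prime CHAR('a)"
    by (intro prime_CHAR_semidom finite_imp_CHAR_pos) simp
  have "CHAR('a) dvd CARD('a)"
    by (simp only: of_nat_eq_0_iff_char_dvd[symmetric] of_nat_card_eq_0)
  with \<open>prime CHAR('a)\<close> show "CHAR('a) dvd 2"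
    using assms prime_dvd_power by metis
qed simp

lemma two_eq_zero_if_CHAR_2:
  assumes "CHAR('a::semiring_1) = 2"
  shows "(2::'a) = 0"
  using of_nat_CHAR[where ?'a = 'a] assms by simp

lemma add_eq_0_iff_CHAR_2:
  assumes "CHAR('a::ring_1) = 2"
  shows "x + y = 0 \<longleftrightarrow> x = (y::'a)"
  using uminus_CHAR_2[OF assms, of y] by (metis add_eq_0_iff2)

(* The library's finite_field_power_card_eq_same is stated for the class finite_field,
   which the sort {field, finite} does not provide. *)
lemma power_card_eq_same:
  fixes x :: "'a::{field,finite}"
  shows "x ^ CARD('a) = x"
proof (cases "x = 0")
  case False
  have "x * (\<Prod>y\<in>UNIV-{0}. x * y) = x * x ^ (CARD('a) - 1) * \<Prod>(UNIV-{0})"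
    by (simp add: prod.distrib mult_ac)
  also have "x * x ^ (CARD('a) - 1) = x ^ CARD('a)"
    using finite_UNIV_card_ge_0[where ?'a = 'a] by (simp flip: power_Suc)
  also have "(\<Prod>y\<in>UNIV-{0}. x * y) = (\<Prod>y\<in>UNIV-{0}. y)"
    by (rule prod.reindex_bij_witness[of _ "\<lambda>y. y / x" "\<lambda>y. x * y"]) (use False in auto)
  finally show ?thesis
    by simp
qed simp

definition artin_schreier_image :: "'a::field set" where
  "artin_schreier_image = range (\<lambda>w. w^2 + w)"

lemma zero_in_artin_schreier_image [simp]: "0 \<in> artin_schreier_image"
  by (auto simp: artin_schreier_image_def intro: image_eqI[where x = 0])

lemma artin_schreier_eq_iff:
  fixes w w0 :: "'a::field"
  assumes "CHAR('a) = 2"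
  shows "w^2 + w = w0^2 + w0 \<longleftrightarrow> w = w0 \<or> w = w0 + 1"
proof -
  have "w^2 + w - (w0^2 + w0) = (w - w0) * (w + (w0 + 1))"
    by (simp add: algebra_simps power2_eq_square)
  then have "w^2 + w = w0^2 + w0 \<longleftrightarrow> (w - w0) * (w + (w0 + 1)) = 0"
    by (metis right_minus_eq)
  then show ?thesis
    by (simp only: mult_eq_0_iff right_minus_eq add_eq_0_iff_CHAR_2[OF assms])
qed

lemma card_artin_schreier_fibre:
  fixes c :: "'a::field"
  assumes "CHAR('a) = 2"
  shows "card {w. w^2 + w = c} = (if c \<in> artin_schreier_image then 2 else 0)"
proof (cases "c \<in> artin_schreier_image")
  case True
  then obtain w0 where "c = w0^2 + w0"
    by (auto simp: artin_schreier_image_def)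
  then have "{w. w^2 + w = c} = {w0, w0 + 1}"
    using artin_schreier_eq_iff[OF assms] by auto
  with True show ?thesis
    by simp
next
  case False
  then have "{w. w^2 + w = c} = {}"
    by (auto simp: artin_schreier_image_def)
  with False show ?thesis
    by simp
qed

lemma card_artin_schreier_image:
  assumes "CHAR('a::{field,finite}) = 2"
  shows "CARD('a) = 2 * card (artin_schreier_image :: 'a set)"
proof -
  have "CARD('a) = (\<Sum>c\<in>artin_schreier_image. card {w::'a. w^2 + w = c})"
    using sum.group[of UNIV artin_schreier_image "\<lambda>w::'a. w^2 + w" "\<lambda>_. 1::nat"]
    by (simp add: artin_schreier_image_def)
  also have "\<dots> = (\<Sum>c\<in>(artin_schreier_image :: 'a set). 2)"
    using card_artin_schreier_fibre[OF assms] by simp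
  finally show ?thesis
    by simp
qed

lemma tr2_add:
  assumes "CHAR('a::field) = 2"
  shows "tr2 n (x + y) = tr2 n x + tr2 n (y::'a)"
proof -
  have "(x + y) ^ 2 ^ i = x ^ 2 ^ i + y ^ 2 ^ i" for i
    by (rule freshmans_dream'[where n = i]) (use assms in simp_all)
  then show ?thesis
    by (simp add: tr2_def sum.distrib)
qed

lemma power2_tr2:
  assumes "CHAR('a::field) = 2"
  shows "(tr2 n x)^2 = tr2 n ((x::'a)^2)"
proof -
  have "(tr2 n x)^2 = (\<Sum>i<n. (x ^ 2 ^ i)^2)"
    unfolding tr2_def by (rule freshmans_dream_sum'[where n = 1]) (use assms in simp_all)
  also have "\<dots> = tr2 n (x^2)"
    unfolding tr2_def by (intro sum.cong refl) (simp add: mult.commute flip: power_mult)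
  finally show ?thesis .
qed

lemma tr2_power2:
  fixes x :: "'a::{field,finite}"
  assumes "CARD('a) = 2 ^ n"
  shows "tr2 n (x^2) = tr2 n x"
proof -
  have "tr2 n (x^2) = (\<Sum>i<n. x ^ 2 ^ Suc i)"
    by (simp add: tr2_def mult.commute flip: power_mult)
  also have "\<dots> = tr2 n x"
    using sum.lessThan_Suc_shift[of "\<lambda>i. x ^ 2 ^ i" n] sum.lessThan_Suc[of "\<lambda>i. x ^ 2 ^ i" n]
      power_card_eq_same[of x] assms
    by (simp add: tr2_def)
  finally show ?thesis .
qed

lemma tr2_zero_or_one:
  fixes x :: "'a::{field,finite}"
  assumes "CARD('a) = 2 ^ n"
  shows "tr2 n x = 0 \<or> tr2 n x = 1"
proof -
  have "(tr2 n x)^2 = tr2 n x"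
    using power2_tr2[OF CHAR_eq_2_if_card_power_2[OF assms]] tr2_power2[OF assms] by simp
  then show ?thesis
    by (metis power2_eq_square mult_cancel_right1 mult_zero_right)
qed

lemma card_tr2_kernel_le:
  assumes "n \<ge> 1"
  shows "card {x::'a::field. tr2 n x = 0} \<le> 2 ^ (n - 1)"
proof -
  define P :: "'a poly" where "P = (\<Sum>i<n. monom 1 (2^i))"
  have poly_P: "poly P x = tr2 n x" for x
    by (simp add: P_def tr2_def poly_sum poly_monom)
  have "degree P \<le> 2 ^ (n - 1)"
    unfolding P_def
    by (intro degree_sum_le) (auto simp: degree_monom_eq intro: power_increasing)
  moreover have "coeff P (2 ^ (n - 1)) = 1"
    using assms by (simp add: P_def coeff_sum coeff_monom power_inject_exp)
  then have "card {x. poly P x = 0} \<le> degree P"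
    by (intro card_poly_roots_bound) auto
  ultimately show ?thesis
    by (simp add: poly_P)
qed

lemma artin_schreier_image_eq_tr2_kernel:
  assumes card: "CARD('a::{field,finite}) = 2 ^ n" and "n \<ge> 1"
  shows "(artin_schreier_image :: 'a set) = {x. tr2 n x = 0}"
proof (rule card_seteq)
  have char2: "CHAR('a) = 2"
    by (rule CHAR_eq_2_if_card_power_2[OF card])
  have "tr2 n (w^2 + w) = tr2 n w + tr2 n w" for w :: 'a
    by (simp only: tr2_add[OF char2] tr2_power2[OF card])
  then have "tr2 n (w^2 + w) = 0" for w :: 'a
    using add_eq_0_iff_CHAR_2[OF char2] by metis
  then show "artin_schreier_image \<subseteq> {x::'a. tr2 n x = 0}"
    by (auto simp: artin_schreier_image_def)
  have "(2::nat) ^ n = 2 * 2 ^ (n - 1)"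
    using \<open>n \<ge> 1\<close> by (cases n) simp_all
  then have "card (artin_schreier_image :: 'a set) = 2 ^ (n - 1)"
    using card_artin_schreier_image[OF char2] card by simp
  then show "card {x::'a. tr2 n x = 0} \<le> card (artin_schreier_image :: 'a set)"
    using card_tr2_kernel_le[OF \<open>n \<ge> 1\<close>] by simp
qed simp

lemma cubic_root_iff:
  fixes b r :: "'a::field"
  assumes "CHAR('a) = 2" and "r \<noteq> 0"
  shows "r^3 + b * r^2 + 1 = 0 \<longleftrightarrow> b = (r^3 + 1) / r^2"
proof -
  have "r^3 + b * r^2 + 1 = 0 \<longleftrightarrow> b * r^2 = r^3 + 1"
    using add_eq_0_iff_CHAR_2[OF assms(1), of "b * r^2" "r^3 + 1"] by (simp add: ac_simps)
  also have "\<dots> \<longleftrightarrow> b = (r^3 + 1) / r^2"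
    using assms(2) by (simp add: eq_divide_eq)
  finally show ?thesis .
qed

lemma cubic_eq_0_iff:
  fixes b r t :: "'a::field"
  assumes char2: "CHAR('a) = 2" and root: "r^3 + b * r^2 + 1 = 0"
  shows "t^3 + b * t^2 + 1 = 0 \<longleftrightarrow> t = r \<or> (r^2 * t)^2 + r^2 * t = r^3"
proof -
  have "r \<noteq> 0"
    using root by auto
  have b_eq: "b * r^2 = r^3 + 1"
    using root add_eq_0_iff_CHAR_2[OF char2, of "b * r^2" "r^3 + 1"] by (simp add: ac_simps)
  have "r^4 * (t^3 + b * t^2 + 1) = (t - r) * ((r^2 * t)^2 + r^2 * t + r^3)
      + t^2 * r^2 * (b * r^2 - r^3 - 1) + 2 * (r^5 * t^2 + r^4)"
    by (simp add: algebra_simps power2_eq_square power3_eq_cube power4_eq_xxxx numeral_eq_Suc)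
  also have "\<dots> = (t - r) * ((r^2 * t)^2 + r^2 * t + r^3)"
    using b_eq two_eq_zero_if_CHAR_2[OF char2] by simp
  finally have factor: "r^4 * (t^3 + b * t^2 + 1) = (t - r) * ((r^2 * t)^2 + r^2 * t + r^3)" .
  have "t^3 + b * t^2 + 1 = 0 \<longleftrightarrow> r^4 * (t^3 + b * t^2 + 1) = 0"
    using \<open>r \<noteq> 0\<close> by simp
  also have "\<dots> \<longleftrightarrow> t - r = 0 \<or> (r^2 * t)^2 + r^2 * t + r^3 = 0"
    by (simp only: factor mult_eq_0_iff)
  finally show ?thesis
    by (simp only: right_minus_eq add_eq_0_iff_CHAR_2[OF char2])
qed

lemma cubic_root_set_eq:
  fixes b r :: "'a::field"
  assumes char2: "CHAR('a) = 2" and root: "r^3 + b * r^2 + 1 = 0"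
  shows "{t. t^3 + b * t^2 + 1 = 0} = insert r ((\<lambda>w. w / r^2) ` {w. w^2 + w = r^3})"
    and "r \<notin> (\<lambda>w. w / r^2) ` {w. w^2 + w = r^3}"
proof -
  have "r \<noteq> 0"
    using root by auto
  have quadratic: "{t. (r^2 * t)^2 + r^2 * t = r^3} = (\<lambda>w. w / r^2) ` {w. w^2 + w = r^3}"
  proof (intro set_eqI iffI)
    fix t assume "t \<in> {t. (r^2 * t)^2 + r^2 * t = r^3}"
    then show "t \<in> (\<lambda>w. w / r^2) ` {w. w^2 + w = r^3}"
      using \<open>r \<noteq> 0\<close> by (intro image_eqI[where x = "r^2 * t"]) auto
  qed (use \<open>r \<noteq> 0\<close> in auto)
  have "{t. t^3 + b * t^2 + 1 = 0} = insert r {t. (r^2 * t)^2 + r^2 * t = r^3}"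
    by (simp add: set_eq_iff cubic_eq_0_iff[OF char2 root])
  with quadratic show "{t. t^3 + b * t^2 + 1 = 0} = insert r ((\<lambda>w. w / r^2) ` {w. w^2 + w = r^3})"
    by simp
  have "r^2 * r = r^3"
    by (simp add: power2_eq_square power3_eq_cube)
  then have "r \<notin> {t. (r^2 * t)^2 + r^2 * t = r^3}"
    using \<open>r \<noteq> 0\<close> by simp
  with quadratic show "r \<notin> (\<lambda>w. w / r^2) ` {w. w^2 + w = r^3}"
    by simp
qed

lemma cubic_roots_eq:
  fixes b r :: "'a::{field,finite}"
  assumes char2: "CHAR('a) = 2" and root: "r^3 + b * r^2 + 1 = 0"
  shows "cubic_roots b = (if r^3 \<in> artin_schreier_image then 3 else 1)"
proof -
  have "r \<noteq> 0"
    using root by auto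
  have "cubic_roots b = Suc (card ((\<lambda>w. w / r^2) ` {w. w^2 + w = r^3}))"
    unfolding cubic_roots_def cubic_root_set_eq(1)[OF assms]
    using cubic_root_set_eq(2)[OF assms] by (simp add: card_insert_disjoint)
  also have "card ((\<lambda>w. w / r^2) ` {w. w^2 + w = r^3}) = card {w. w^2 + w = r^3}"
    using \<open>r \<noteq> 0\<close> by (intro card_image inj_onI) simp
  finally show ?thesis
    using card_artin_schreier_fibre[OF char2, of "r^3"] by simp
qed

lemma cubic_roots_neq_2:
  assumes "CHAR('a::{field,finite}) = 2"
  shows "cubic_roots (b::'a) \<noteq> 2"
proof (cases "\<exists>r::'a. r^3 + b * r^2 + 1 = 0")
  case True
  then obtain r where "r^3 + b * r^2 + 1 = 0"
    by blast
  from cubic_roots_eq[OF assms this] show ?thesis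
    by simp
qed (simp add: cubic_roots_def)

lemma V_2_eq_0:
  assumes "CHAR('a::{field,finite}) = 2"
  shows "V 2 (F::'a itself) = 0"
  using cubic_roots_neq_2[OF assms] by (simp add: V_def)

lemma cubic_roots_eq_1_iff:
  fixes b r :: "'a::{field,finite}"
  assumes "CHAR('a) = 2" and "r^3 + b * r^2 + 1 = 0"
  shows "cubic_roots b = 1 \<longleftrightarrow> r^3 \<notin> artin_schreier_image"
  by (simp add: cubic_roots_eq[OF assms])

lemma eq_if_cubic_roots_eq_1:
  fixes b r s :: "'a::{field,finite}"
  assumes "cubic_roots b = 1" and "r^3 + b * r^2 + 1 = 0" and "s^3 + b * s^2 + 1 = 0"
  shows "r = s"
  using assms unfolding cubic_roots_def
  by (metis (mono_tags, lifting) card_1_singletonE mem_Collect_eq singletonD)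

lemma cubic_roots_eq_1_obtain_root:
  fixes b :: "'a::{field,finite}"
  assumes char2: "CHAR('a) = 2" and "cubic_roots b = 1"
  obtains r where "r^3 \<notin> artin_schreier_image" and "b = (r^3 + 1) / r^2"
proof -
  have "{t. t^3 + b * t^2 + 1 = 0} \<noteq> {}"
    using \<open>cubic_roots b = 1\<close> by (metis card.empty cubic_roots_def zero_neq_one)
  then obtain r where r: "r^3 + b * r^2 + 1 = 0"
    by blast
  then have "r \<noteq> 0"
    by auto
  with r have "b = (r^3 + 1) / r^2"
    using cubic_root_iff[OF char2] by blast
  moreover have "r^3 \<notin> artin_schreier_image"
    using cubic_roots_eq_1_iff[OF char2 r] \<open>cubic_roots b = 1\<close> by simp
  ultimately show ?thesis
    using that by blast
qed

lemma V_1_eq_card_cubes_notin_artin_schreier_image: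
  assumes char2: "CHAR('a::{field,finite}) = 2"
  shows "V 1 (F::'a itself) = card {r::'a. r^3 \<notin> artin_schreier_image}"
proof -
  let ?coeff = "\<lambda>r::'a. (r^3 + 1) / r^2"
  let ?R = "{r::'a. r^3 \<notin> artin_schreier_image}"
  have root: "r^3 + ?coeff r * r^2 + 1 = 0" if "r \<in> ?R" for r
  proof -
    have "r \<noteq> 0"
      using that by auto
    then show ?thesis
      using cubic_root_iff[OF char2] by blast
  qed
  have one_root: "cubic_roots (?coeff r) = 1" if "r \<in> ?R" for r
    using that cubic_roots_eq_1_iff[OF char2 root[OF that]] by simp
  have inj: "inj_on ?coeff ?R"
  proof (rule inj_onI)
    fix r s
    assume r: "r \<in> ?R" and s: "s \<in> ?R" and eq: "?coeff r = ?coeff s"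
    have "s^3 + ?coeff r * s^2 + 1 = 0"
      using root[OF s] by (simp only: eq)
    with one_root[OF r] root[OF r] show "r = s"
      by (rule eq_if_cubic_roots_eq_1)
  qed
  have image: "?coeff ` ?R = {b. cubic_roots b = 1}"
  proof (intro subset_antisym subsetI)
    fix b
    assume "b \<in> ?coeff ` ?R"
    then show "b \<in> {b. cubic_roots b = 1}"
      using one_root by blast
  next
    fix b :: 'a
    assume "b \<in> {b. cubic_roots b = 1}"
    then obtain r where "r \<in> ?R" and "b = ?coeff r"
      using cubic_roots_eq_1_obtain_root[OF char2] by blast
    then show "b \<in> ?coeff ` ?R"
      by blast
  qed
  have "V 1 F = card (?coeff ` ?R)"
    by (simp only: V_def image)
  also have "\<dots> = card ?R"
    by (rule card_image[OF inj])
  finally show ?thesis .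
qed

lemma inj_cube_if_card_mod_3_eq_2:
  assumes "CARD('a::{field,finite}) mod 3 = 2"
  shows "inj (\<lambda>r::'a. r^3)"
proof (rule injI)
  fix r s :: 'a
  assume "r^3 = s^3"
  show "r = s"
  proof (cases "s = 0")
    case False
    define x where "x = r / s"
    have "x^3 = 1"
      using \<open>r^3 = s^3\<close> False by (simp add: x_def power_divide)
    obtain k where "CARD('a) = 3 * k + 2"
      using assms by (metis div_mod_decomp mult.commute)
    then have "x = x ^ (3 * k + 2)"
      using power_card_eq_same[of x] by simp
    also have "\<dots> = (x^3)^k * x^2"
      by (simp only: power_add power_mult)
    also have "\<dots> = x * x"
      using \<open>x^3 = 1\<close> by (simp add: power2_eq_square)
    finally have "x = x * x" .
    moreover have "x \<noteq> 0"
      using \<open>x^3 = 1\<close> by auto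
    ultimately have "x = 1"
      by simp
    with False show ?thesis
      by (simp add: x_def)
  qed (use \<open>r^3 = s^3\<close> in simp)
qed

lemma power_2_odd_mod_3: "(2::nat) ^ (2 * m + 1) mod 3 = 2"
proof (induction m)
  case (Suc m)
  have "(2::nat) ^ (2 * Suc m + 1) = 4 * 2 ^ (2 * m + 1)"
    by simp
  also have "\<dots> mod 3 = 4 * (2 ^ (2 * m + 1) mod 3) mod 3"
    by (simp only: mod_mult_right_eq)
  finally show ?case
    using Suc.IH by simp
qed simp

lemma V_1_eq_half_card:
  assumes "CARD('a::{field,finite}) = 2 ^ (2 * m + 1)"
  shows "V 1 (F::'a itself) = CARD('a) div 2"
proof -
  have char2: "CHAR('a) = 2"
    by (rule CHAR_eq_2_if_card_power_2[OF assms])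
  have "inj (\<lambda>r::'a. r^3)"
    using inj_cube_if_card_mod_3_eq_2 assms power_2_odd_mod_3 by metis
  have "V 1 F = card ((\<lambda>r::'a. r^3) -` (- artin_schreier_image))"
    unfolding V_1_eq_card_cubes_notin_artin_schreier_image[OF char2] by (simp add: vimage_def)
  also have "\<dots> = card (- artin_schreier_image :: 'a set)"
    using \<open>inj (\<lambda>r::'a. r^3)\<close> by (simp add: card_vimage_inj finite_UNIV_inj_surj)
  also have "\<dots> = CARD('a) - card (artin_schreier_image :: 'a set)"
    by (simp add: Compl_eq_Diff_UNIV card_Diff_subset)
  finally show ?thesis
    using card_artin_schreier_image[OF char2] by simp
qed

lemma V_1_eq_T_count:
  assumes card: "CARD('a::{field,finite}) = 2 ^ n" and "n \<ge> 1"
  shows "V 1 (F::'a itself) = T_count n F"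
proof -
  have "V 1 F = card {r::'a. r^3 \<notin> artin_schreier_image}"
    by (rule V_1_eq_card_cubes_notin_artin_schreier_image[OF CHAR_eq_2_if_card_power_2[OF card]])
  also have "{r::'a. r^3 \<notin> artin_schreier_image} = {r. tr2 n (r^3) = 1}"
    using tr2_zero_or_one[OF card] by (auto simp: artin_schreier_image_eq_tr2_kernel[OF assms])
  finally show ?thesis
    by (simp add: T_count_def)
qed

theorem lemma4p5:
  fixes F :: "'a::{field,finite} itself"
  assumes "even CARD('a)" and "CARD('a) \<ge> 5"
  shows "(\<forall>m. CARD('a) = 2^(2*m+1) \<longrightarrow>
            V 2 F = 0 \<and> V 1 F = CARD('a) div 2)
       \<and> (\<forall>m. CARD('a) = 2^(2*m) \<longrightarrow>
            V 2 F = 0 \<and> V 1 F = T_count (2*m) F)"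
proof (intro conjI allI impI)
  fix m
  assume card: "CARD('a) = 2^(2*m+1)"
  show "V 2 F = 0"
    by (rule V_2_eq_0[OF CHAR_eq_2_if_card_power_2[OF card]])
  show "V 1 F = CARD('a) div 2"
    by (rule V_1_eq_half_card[OF card])
next
  fix m
  assume card: "CARD('a) = 2^(2*m)"
  show "V 2 F = 0"
    by (rule V_2_eq_0[OF CHAR_eq_2_if_card_power_2[OF card]])
  have "2 * m \<ge> 1"
    using card \<open>CARD('a) \<ge> 5\<close> by (cases m) auto
  then show "V 1 F = T_count (2*m) F"
    by (rule V_1_eq_T_count[OF card])
qed

end
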